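(* If $a_j\neq0$ for $1\le j\le 4$, then $HC_F(\mathbf v,d)\cap(\hat\ell_1\cup\hat\ell_2\cup\hat\ell_3\cup\hat\ell_4)=\{\mathbf p_1,\mathbf p_2,\mathbf p_3,\mathbf p_4\}$, and these four points are singular points of $HC_F(\mathbf v,d)$.
   Context: On $\mathbb{C}P^4$ use homogeneous coordinates $[w_0,w_1,w_2,w_3,x_1]$. Let $Y$ be the surface $w_0w_3-w_1w_2=0$, $x_1^2+w_0w_3=0$. For parameters $[\mathbf v,d]=[v_{11},v_{12},v_{21},v_{22},d]\in\mathbb{C}P^4$ (complex, not all zero), $HC_F(\mathbf v,d)$ is the set of points of $Y$ satisfying $A(\mathbf w)x_1+C(\mathbf w)=0$, where $A(\mathbf w)=2\big(v_{22}(w_3-w_0)-v_{12}(w_2-w_1)\big)$ and $C(\mathbf w)=a_1w_0w_1+a_2w_0w_2+a_3w_1w_3+a_4w_2w_3$, with $a_1=v_{11}-v_{21}-d$, $a_2=-v_{11}-v_{21}+d$, $a_3=v_{11}+v_{21}+d$, $a_4=-v_{11}+v_{21}-d$. The lines on $Y$ are $\hat\ell_1=\{[w_0,w_1,0,0,0]\}$, $\hat\ell_2=\{[w_0,0,w_2,0,0]\}$, $\hat\ell_3=\{[0,0,w_2,w_3,0]\}$, $\hat\ell_4=\{[0,w_1,0,w_3,0]\}$. The points are $\mathbf p_1=[1,0,0,0,0]$, $\mathbf p_2=[0,0,0,1,0]$, $\mathbf p_3=[0,1,0,0,0]$, $\mathbf p_4=[0,0,1,0,0]$. A point of $HC_F(\mathbf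 v,d)$ is singular if the Jacobian matrix of the three defining polynomials $w_0w_3-w_1w_2$, $x_1^2+w_0w_3$, $A(\mathbf w)x_1+C(\mathbf w)$ has rank less than $3$ there. *)

theory Defs
  imports "HOL-Analysis.Analysis"
begin

text \<open>Points of CP^4 are represented by their nonzero homogeneous coordinate vectors
  p = vector [w0, w1, w2, w3, x1] :: complex^5, i.e. p$1 = w0, p$2 = w1, p$3 = w2,
  p$4 = w3, p$5 = x1. A subset of CP^4 cut out by homogeneous equations is represented
  by the cone of all its nonzero representatives.\<close>

definition a1 :: "complex \<Rightarrow> complex \<Rightarrow> complex \<Rightarrow> complex" where
  "a1 v11 v21 d = v11 - v21 - d"
definition a2 :: "complex \<Rightarrow> complex \<Rightarrow> complex \<Rightarrow> complex" where
  "a2 v11 v21 d = - v11 - v21 + d"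
definition a3 :: "complex \<Rightarrow> complex \<Rightarrow> complex \<Rightarrow> complex" where
  "a3 v11 v21 d = v11 + v21 + d"
definition a4 :: "complex \<Rightarrow> complex \<Rightarrow> complex \<Rightarrow> complex" where
  "a4 v11 v21 d = - v11 + v21 - d"

definition Apoly :: "complex \<Rightarrow> complex \<Rightarrow> complex^5 \<Rightarrow> complex" where
  "Apoly v12 v22 p = 2 * (v22 * (p$4 - p$1) - v12 * (p$3 - p$2))"

definition Cpoly :: "complex \<Rightarrow> complex \<Rightarrow> complex \<Rightarrow> complex^5 \<Rightarrow> complex" where
  "Cpoly v11 v21 d p = a1 v11 v21 d * p$1 * p$2 + a2 v11 v21 d * p$1 * p$3
                      + a3 v11 v21 d * p$2 * p$4 + a4 v11 v21 d * p$3 * p$4"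

definition G1 :: "complex^5 \<Rightarrow> complex" where
  "G1 p = p$1 * p$4 - p$2 * p$3"
definition G2 :: "complex^5 \<Rightarrow> complex" where
  "G2 p = (p$5)^2 + p$1 * p$4"
definition G3 :: "complex \<Rightarrow> complex \<Rightarrow> complex \<Rightarrow> complex \<Rightarrow> complex \<Rightarrow> complex^5 \<Rightarrow> complex" where
  "G3 v11 v12 v21 v22 d p = Apoly v12 v22 p * p$5 + Cpoly v11 v21 d p"

definition Ysurf :: "(complex^5) set" where
  "Ysurf = {p. p \<noteq> 0 \<and> G1 p = 0 \<and> G2 p = 0}"

definition HC_F :: "complex \<Rightarrow> complex \<Rightarrow> complex \<Rightarrow> complex \<Rightarrow> complex \<Rightarrow> (complex^5) set" where
  "HC_F v11 v12 v21 v22 d = {p \<in> Ysurf. G3 v11 v12 v21 v22 d p = 0}"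

definition line1 :: "(complex^5) set" where
  "line1 = {p. p \<noteq> 0 \<and> p$3 = 0 \<and> p$4 = 0 \<and> p$5 = 0}"
definition line2 :: "(complex^5) set" where
  "line2 = {p. p \<noteq> 0 \<and> p$2 = 0 \<and> p$4 = 0 \<and> p$5 = 0}"
definition line3 :: "(complex^5) set" where
  "line3 = {p. p \<noteq> 0 \<and> p$1 = 0 \<and> p$2 = 0 \<and> p$5 = 0}"
definition line4 :: "(complex^5) set" where
  "line4 = {p. p \<noteq> 0 \<and> p$1 = 0 \<and> p$3 = 0 \<and> p$5 = 0}"

definition pt1 :: "complex^5" where "pt1 = vector [1, 0, 0, 0, 0]"
definition pt2 :: "complex^5" where "pt2 = vector [0, 0, 0, 1, 0]"
definition pt3 :: "complex^5" where "pt3 = vector [0, 1, 0, 0, 0]"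
definition pt4 :: "complex^5" where "pt4 = vector [0, 0, 1, 0, 0]"

definition proj_pt :: "complex^5 \<Rightarrow> (complex^5) set" where
  "proj_pt q = {c *s q | c. c \<noteq> 0}"

definition partial :: "(complex^5 \<Rightarrow> complex) \<Rightarrow> 5 \<Rightarrow> complex^5 \<Rightarrow> complex" where
  "partial F j p = deriv (\<lambda>t. F (\<chi> k. if k = j then t else p$k)) (p$j)"

definition jacobian :: "complex \<Rightarrow> complex \<Rightarrow> complex \<Rightarrow> complex \<Rightarrow> complex \<Rightarrow> complex^5 \<Rightarrow> complex^5^3" where
  "jacobian v11 v12 v21 v22 d p =
     (\<chi> i j. partial (if i = 1 then G1 else if i = 2 then G2 else G3 v11 v12 v21 v22 d) j p)"

definition singular_pt :: "complex \<Rightarrow> complex \<Rightarrow> complex \<Rightarrow> complex \<Rightarrow> complex \<Rightarrow> complex^5 \<Rightarrow> bool" where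
  "singular_pt v11 v12 v21 v22 d p \<longleftrightarrow>
     p \<in> HC_F v11 v12 v21 v22 d \<and> rank (jacobian v11 v12 v21 v22 d p) < 3"

end

theory Submission
  imports Defs
begin

text \<open>On each line \<open>\<ell>\<^sub>i\<close> the two quadrics defining \<open>Y\<close> vanish identically and so does
  \<open>x\<^sub>1\<close>, hence the third equation restricts to \<open>a\<^sub>i\<close> times the product of the two
  coordinates spanning \<open>\<ell>\<^sub>i\<close>; for \<open>a\<^sub>i \<noteq> 0\<close> it cuts out exactly the two coordinate points
  of \<open>\<ell>\<^sub>i\<close>. At each coordinate point the gradients of the two quadrics are proportional,
  so two rows of the Jacobian are dependent and its rank is at most 2, whatever the third
  equation is.\<close>

lemma exhaust_5:
  fixes x :: 5
  shows "x = 1 \<or> x = 2 \<or> x = 3 \<or> x = 4 \<or> x = 5"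
proof (induct x)
  case (of_int z)
  then have "z = 0 \<or> z = 1 \<or> z = 2 \<or> z = 3 \<or> z = 4" by fastforce
  then show ?case by auto
qed

lemma forall_5: "(\<forall>i::5. P i) \<longleftrightarrow> P 1 \<and> P 2 \<and> P 3 \<and> P 4 \<and> P 5"
  by (metis exhaust_5)

lemma vector_5 [simp]:
  "(vector [a, b, c, e, f] :: 'a::zero^5) $ 1 = a"
  "(vector [a, b, c, e, f] :: 'a::zero^5) $ 2 = b"
  "(vector [a, b, c, e, f] :: 'a::zero^5) $ 3 = c"
  "(vector [a, b, c, e, f] :: 'a::zero^5) $ 4 = e"
  "(vector [a, b, c, e, f] :: 'a::zero^5) $ 5 = f"
  unfolding vector_def by simp_all

lemma rank_less_card_rows:
  fixes A :: "'a::field^'n^'m"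
  assumes "i \<noteq> j" and "row j A = c *s row i A"
  shows "rank A < CARD('m)"
proof -
  let ?R = "(\<lambda>k. row k A) ` (UNIV - {j})"
  have "rows A \<subseteq> vec.span ?R"
  proof
    fix x assume "x \<in> rows A"
    then obtain k where "x = row k A" by (auto simp: rows_def)
    then show "x \<in> vec.span ?R"
      using assms by (cases "k = j") (auto intro: vec.span_base vec.span_scale)
  qed
  then have "rank A \<le> card ?R"
    unfolding row_rank_def_gen by (rule vec.dim_le_card) simp
  also have "\<dots> \<le> card (UNIV - {j} :: 'm set)"
    by (rule card_image_le) simp
  also have "\<dots> < CARD('m)"
    by (simp add: card_Diff_subset)
  finally show ?thesis .
qed

definition gradient :: "(complex^5 \<Rightarrow> complex) \<Rightarrow> complex^5 \<Rightarrow> complex^5" where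
  "gradient F p = (\<chi> j. partial F j p)"

lemma partial_eqI:
  assumes "((\<lambda>t. F (\<chi> k. if k = j then t else p$k)) has_field_derivative D) (at (p$j))"
  shows "partial F j p = D"
  unfolding partial_def using assms by (rule DERIV_imp_deriv)

lemma gradient_G1: "gradient G1 p = vector [p$4, - p$3, - p$2, p$1, 0]"
  by (simp add: vec_eq_iff forall_5 gradient_def, intro conjI partial_eqI)
     (auto simp: G1_def intro!: derivative_eq_intros)

lemma gradient_G2: "gradient G2 p = vector [p$4, 0, 0, p$1, 2 * p$5]"
  by (simp add: vec_eq_iff forall_5 gradient_def, intro conjI partial_eqI)
     (auto simp: G2_def intro!: derivative_eq_intros)

lemma rows_jacobian:
  "row 1 (jacobian v11 v12 v21 v22 d p) = gradient G1 p"
  "row 2 (jacobian v11 v12 v21 v22 d p) = gradient G2 p"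
  by (simp_all add: row_def jacobian_def gradient_def)

lemma singular_pt_if_gradients_dependent:
  assumes "p \<in> HC_F v11 v12 v21 v22 d" and "gradient G2 p = c *s gradient G1 p"
  shows "singular_pt v11 v12 v21 v22 d p"
  using assms rank_less_card_rows[of 1 2 "jacobian v11 v12 v21 v22 d p" c]
  by (simp add: singular_pt_def rows_jacobian)

lemma coordinate_points_in_HC_F:
  "pt1 \<in> HC_F v11 v12 v21 v22 d" "pt2 \<in> HC_F v11 v12 v21 v22 d"
  "pt3 \<in> HC_F v11 v12 v21 v22 d" "pt4 \<in> HC_F v11 v12 v21 v22 d"
  by (simp_all add: HC_F_def Ysurf_def G1_def G2_def G3_def Apoly_def Cpoly_def
      pt1_def pt2_def pt3_def pt4_def vec_eq_iff forall_5)

lemma singular_pt_coordinate_points: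
  "singular_pt v11 v12 v21 v22 d pt1" "singular_pt v11 v12 v21 v22 d pt2"
  "singular_pt v11 v12 v21 v22 d pt3" "singular_pt v11 v12 v21 v22 d pt4"
proof -
  have dependent:
    "gradient G2 pt1 = 1 *s gradient G1 pt1" "gradient G2 pt2 = 1 *s gradient G1 pt2"
    "gradient G2 pt3 = 0 *s gradient G1 pt3" "gradient G2 pt4 = 0 *s gradient G1 pt4"
    by (simp_all add: gradient_G1 gradient_G2 pt1_def pt2_def pt3_def pt4_def vec_eq_iff forall_5)
  show "singular_pt v11 v12 v21 v22 d pt1" "singular_pt v11 v12 v21 v22 d pt2"
    "singular_pt v11 v12 v21 v22 d pt3" "singular_pt v11 v12 v21 v22 d pt4"
    using singular_pt_if_gradients_dependent coordinate_points_in_HC_F dependent by metis+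
qed

lemma proj_pt_axis: "p \<in> proj_pt (axis i 1) \<longleftrightarrow> p$i \<noteq> 0 \<and> (\<forall>k. k \<noteq> i \<longrightarrow> p$k = 0)"
proof
  assume "p \<in> proj_pt (axis i 1)"
  then show "p$i \<noteq> 0 \<and> (\<forall>k. k \<noteq> i \<longrightarrow> p$k = 0)"
    by (auto simp: proj_pt_def axis_def)
next
  assume p: "p$i \<noteq> 0 \<and> (\<forall>k. k \<noteq> i \<longrightarrow> p$k = 0)"
  then have "p = p$i *s axis i 1"
    by (auto simp: vec_eq_iff axis_def)
  with p show "p \<in> proj_pt (axis i 1)"
    unfolding proj_pt_def by blast
qed

definition coordinate_line :: "5 \<Rightarrow> 5 \<Rightarrow> (complex^5) set" where
  "coordinate_line i j = {p. p \<noteq> 0 \<and> (\<forall>k. k \<noteq> i \<and> k \<noteq> j \<longrightarrow> p$k = 0)}"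

lemma coordinate_line_vanishing_coordinate:
  assumes "i \<noteq> j"
  shows "{p \<in> coordinate_line i j. p$i = 0 \<or> p$j = 0} = proj_pt (axis i 1) \<union> proj_pt (axis j 1)"
  using assms by (auto simp: coordinate_line_def proj_pt_axis vec_eq_iff)

lemma lines_eq_coordinate_lines:
  "line1 = coordinate_line 1 2" "line2 = coordinate_line 1 3"
  "line3 = coordinate_line 3 4" "line4 = coordinate_line 2 4"
  by (auto simp: line1_def line2_def line3_def line4_def coordinate_line_def forall_5)

lemma coordinate_points_eq_axis:
  "pt1 = axis 1 1" "pt2 = axis 4 1" "pt3 = axis 2 1" "pt4 = axis 3 1"
  by (simp_all add: pt1_def pt2_def pt3_def pt4_def axis_def vec_eq_iff forall_5)

lemma HC_F_inter_lines_eq: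
  "HC_F v11 v12 v21 v22 d \<inter> line1 = {p \<in> line1. a1 v11 v21 d * (p$1 * p$2) = 0}"
  "HC_F v11 v12 v21 v22 d \<inter> line2 = {p \<in> line2. a2 v11 v21 d * (p$1 * p$3) = 0}"
  "HC_F v11 v12 v21 v22 d \<inter> line3 = {p \<in> line3. a4 v11 v21 d * (p$3 * p$4) = 0}"
  "HC_F v11 v12 v21 v22 d \<inter> line4 = {p \<in> line4. a3 v11 v21 d * (p$2 * p$4) = 0}"
  by (auto simp: HC_F_def Ysurf_def G1_def G2_def G3_def Apoly_def Cpoly_def
      line1_def line2_def line3_def line4_def algebra_simps)

lemma HC_F_inter_lines:
  "a1 v11 v21 d \<noteq> 0 \<Longrightarrow> HC_F v11 v12 v21 v22 d \<inter> line1 = proj_pt pt1 \<union> proj_pt pt3"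
  "a2 v11 v21 d \<noteq> 0 \<Longrightarrow> HC_F v11 v12 v21 v22 d \<inter> line2 = proj_pt pt1 \<union> proj_pt pt4"
  "a4 v11 v21 d \<noteq> 0 \<Longrightarrow> HC_F v11 v12 v21 v22 d \<inter> line3 = proj_pt pt4 \<union> proj_pt pt2"
  "a3 v11 v21 d \<noteq> 0 \<Longrightarrow> HC_F v11 v12 v21 v22 d \<inter> line4 = proj_pt pt3 \<union> proj_pt pt2"
  unfolding HC_F_inter_lines_eq
  by (simp_all add: lines_eq_coordinate_lines coordinate_points_eq_axis
      coordinate_line_vanishing_coordinate)

theorem lemma5p8:
  fixes v11 v12 v21 v22 d :: complex
  assumes "(v11, v12, v21, v22, d) \<noteq> (0, 0, 0, 0, 0)"
    and "a1 v11 v21 d \<noteq> 0" and "a2 v11 v21 d \<noteq> 0"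
    and "a3 v11 v21 d \<noteq> 0" and "a4 v11 v21 d \<noteq> 0"
  shows "HC_F v11 v12 v21 v22 d \<inter> (line1 \<union> line2 \<union> line3 \<union> line4)
           = proj_pt pt1 \<union> proj_pt pt2 \<union> proj_pt pt3 \<union> proj_pt pt4
         \<and> singular_pt v11 v12 v21 v22 d pt1 \<and> singular_pt v11 v12 v21 v22 d pt2
         \<and> singular_pt v11 v12 v21 v22 d pt3 \<and> singular_pt v11 v12 v21 v22 d pt4"
proof -
  let ?H = "HC_F v11 v12 v21 v22 d"
  have "?H \<inter> (line1 \<union> line2 \<union> line3 \<union> line4)
      = (?H \<inter> line1) \<union> (?H \<inter> line2) \<union> (?H \<inter> line3) \<union> (?H \<inter> line4)"
    by blast
  also have "\<dots> = proj_pt pt1 \<union> proj_pt pt2 \<union> proj_pt pt3 \<union> proj_pt pt4"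
    using assms(2-5) by (auto simp: HC_F_inter_lines)
  finally show ?thesis
    by (simp add: singular_pt_coordinate_points)
qed

end
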